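(* Let $k,n,t$ be positive integers. If $\pi$ is chosen uniformly at random from $NC^k(n)$, the expected number of blocks of $\pi$ of size $tk$ is $$\frac{(nk+1)\binom{n(k+1)-t-1}{nk-1}}{\binom{(k+1)n}{n}}.$$
   Context: A partition $\pi$ of $[N]=\{1,\dots,N\}$ is non-crossing if there are no $1\le a<b<c<d\le N$ with $a,c$ in one block and $b,d$ in another. $NC^k(n)$ is the set of non-crossing partitions of $[kn]$ all of whose blocks have size divisible by $k$. $\binom{a}{b}=\frac{a!}{b!(a-b)!}$ if $0\le b\le a$ and $0$ otherwise. *)

theory Defs
  imports Complex_Main "HOL-Library.Disjoint_Sets"
begin

definition noncrossing_partition :: "nat \<Rightarrow> nat set set \<Rightarrow> bool" where
  "noncrossing_partition N \<pi> \<longleftrightarrow>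
     partition_on {1..N} \<pi> \<and>
     \<not> (\<exists>a b c d B1 B2. 1 \<le> a \<and> a < b \<and> b < c \<and> c < d \<and> d \<le> N \<and>
          B1 \<in> \<pi> \<and> B2 \<in> \<pi> \<and> B1 \<noteq> B2 \<and> a \<in> B1 \<and> c \<in> B1 \<and> b \<in> B2 \<and> d \<in> B2)"

definition NCk :: "nat \<Rightarrow> nat \<Rightarrow> nat set set set" where
  "NCk k n = {\<pi>. noncrossing_partition (k * n) \<pi> \<and> (\<forall>B\<in>\<pi>. k dvd card B)}"

definition binom :: "int \<Rightarrow> int \<Rightarrow> nat" where
  "binom a b = (if 0 \<le> b \<and> b \<le> a then nat a choose nat b else 0)"

end

theory Submission
  imports Defs "HOL-Computational_Algebra.Formal_Power_Series"
begin

unbundle fps_syntax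

text \<open>Let \<open>D\<close> be the generating function of the non-crossing partitions of \<open>{0..<L}\<close>
  all of whose blocks have size divisible by \<open>k\<close>, and \<open>E\<^sub>s\<close> that of those in which the block
  of \<open>0\<close> has exactly \<open>s\<close> elements and all other blocks have size divisible by \<open>k\<close>. Cutting
  such a partition just before the \<open>(s+1)\<close>-st element of the block of \<open>0\<close> splits it into two
  partitions of the same kind, which gives \<open>E\<^sub>s\<^sub>+\<^sub>1 = x D E\<^sub>s\<close> and \<open>D = 1 + E\<^sub>k D\<close>. Hence
  \<open>D = 1 + x\<^sup>k D\<^sup>k\<^sup>+\<^sup>1\<close>, and the coefficient of \<open>x\<^sup>k\<^sup>m\<close> in \<open>D\<^sup>s\<close> is the Fuss--Catalan number
  \<open>s/(s+(k+1)m) \<cdot> (s+(k+1)m choose m)\<close>.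
  The cyclic shift \<open>i \<mapsto> i+1 (mod L)\<close> permutes these partitions, so every point lies in a
  block of size \<open>j\<close> equally often; counting pairs of a point and its block gives
  \<open>j \<cdot> \<Sum>\<^sub>\<pi> #{blocks of size j} = L \<cdot> [x\<^sup>L] E\<^sub>j\<close>. For \<open>L = kn\<close> and \<open>j = tk\<close> both sides
  are explicit binomial coefficients.\<close>

section \<open>Non-crossing partitions\<close>

definition non_crossing :: "'a::linorder set set \<Rightarrow> bool" where
  "non_crossing P \<longleftrightarrow> (\<forall>x y z w X Y. x < y \<longrightarrow> y < z \<longrightarrow> z < w \<longrightarrow> X \<in> P \<longrightarrow> Y \<in> P \<longrightarrow>
     x \<in> X \<longrightarrow> z \<in> X \<longrightarrow> y \<in> Y \<longrightarrow> w \<in> Y \<longrightarrow> X = Y)"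

lemma non_crossingI:
  "(\<And>x y z w X Y. x < y \<Longrightarrow> y < z \<Longrightarrow> z < w \<Longrightarrow> X \<in> P \<Longrightarrow> Y \<in> P \<Longrightarrow>
     x \<in> X \<Longrightarrow> z \<in> X \<Longrightarrow> y \<in> Y \<Longrightarrow> w \<in> Y \<Longrightarrow> X = Y) \<Longrightarrow> non_crossing P"
  unfolding non_crossing_def by blast

lemma non_crossingD:
  "non_crossing P \<Longrightarrow> x < y \<Longrightarrow> y < z \<Longrightarrow> z < w \<Longrightarrow> X \<in> P \<Longrightarrow> Y \<in> P \<Longrightarrow>
     x \<in> X \<Longrightarrow> z \<in> X \<Longrightarrow> y \<in> Y \<Longrightarrow> w \<in> Y \<Longrightarrow> X = Y"
  unfolding non_crossing_def by blast

lemma non_crossing_subset: "non_crossing P \<Longrightarrow> Q \<subseteq> P \<Longrightarrow> non_crossing Q"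
  unfolding non_crossing_def by blast

lemma non_crossing_insert_singleton:
  assumes "non_crossing P"
  shows "non_crossing (insert {x} P)"
proof (rule non_crossingI)
  fix x' y z w X Y
  assume order: "x' < y" "y < z" "z < w" and "X \<in> insert {x} P" "Y \<in> insert {x} P"
    and mem: "x' \<in> X" "z \<in> X" "y \<in> Y" "w \<in> Y"
  then have "X \<in> P" "Y \<in> P" by auto
  then show "X = Y" using non_crossingD[OF assms order _ _ mem] by blast
qed

definition restrict_partition :: "'a set set \<Rightarrow> 'a set \<Rightarrow> 'a set set" where
  "restrict_partition P A = (\<inter>) A ` P - {{}}"

lemma non_crossing_restrict_partition:
  assumes "non_crossing P"
  shows "non_crossing (restrict_partition P A)"
proof (rule non_crossingI)
  fix x y z w X Y
  assume order: "x < y" "y < z" "z < w" and X: "X \<in> restrict_partition P A"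
    and Y: "Y \<in> restrict_partition P A" and mem: "x \<in> X" "z \<in> X" "y \<in> Y" "w \<in> Y"
  obtain X0 where "X0 \<in> P" "X = A \<inter> X0" using X by (auto simp: restrict_partition_def)
  moreover obtain Y0 where "Y0 \<in> P" "Y = A \<inter> Y0" using Y by (auto simp: restrict_partition_def)
  ultimately show "X = Y" using non_crossingD[OF assms order] mem by blast
qed

lemma non_crossing_image_strict_mono:
  assumes f: "strict_mono_on (\<Union>P) f" and P: "non_crossing P"
  shows "non_crossing ((`) f ` P)"
proof (rule non_crossingI)
  fix x y z w X Y
  assume order: "x < y" "y < z" "z < w" and X: "X \<in> (`) f ` P" and Y: "Y \<in> (`) f ` P"
    and mem: "x \<in> X" "z \<in> X" "y \<in> Y" "w \<in> Y"
  obtain X0 where X0: "X0 \<in> P" "X = f ` X0" using X by blast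
  obtain Y0 where Y0: "Y0 \<in> P" "Y = f ` Y0" using Y by blast
  obtain x0 z0 where x0: "x0 \<in> X0" "x = f x0" and z0: "z0 \<in> X0" "z = f z0"
    using mem(1,2) X0(2) by blast
  obtain y0 w0 where y0: "y0 \<in> Y0" "y = f y0" and w0: "w0 \<in> Y0" "w = f w0"
    using mem(3,4) Y0(2) by blast
  have less: "u < v" if "u \<in> X0 \<union> Y0" "v \<in> X0 \<union> Y0" "f u < f v" for u v
    using strict_mono_on_less[OF f] that X0(1) Y0(1) by blast
  have "x0 < y0" "y0 < z0" "z0 < w0"
    using order x0 y0 z0 w0 by (auto intro!: less)
  then show "X = Y" using non_crossingD[OF P _ _ _ X0(1) Y0(1) x0(1) z0(1) y0(1) w0(1)] X0 Y0 by blast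
qed

definition block_of :: "'a \<Rightarrow> 'a set set \<Rightarrow> 'a set" where
  "block_of x P = \<Union>{B \<in> P. x \<in> B}"

lemma partition_on_same_block:
  "partition_on A P \<Longrightarrow> X \<in> P \<Longrightarrow> Y \<in> P \<Longrightarrow> x \<in> X \<Longrightarrow> x \<in> Y \<Longrightarrow> X = Y"
  unfolding partition_on_def disjoint_def by blast

lemma image_Int_self: "(\<And>X. X \<in> P \<Longrightarrow> X \<subseteq> A) \<Longrightarrow> (\<inter>) A ` P = P"
proof -
  assume "\<And>X. X \<in> P \<Longrightarrow> X \<subseteq> A"
  then have "(\<inter>) A ` P = id ` P" by (intro image_cong) auto
  then show ?thesis by simp
qed

lemma partition_on_Un:
  assumes P: "partition_on A P" and Q: "partition_on B Q" and AB: "A \<inter> B = {}"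
  shows "partition_on (A \<union> B) (P \<union> Q)"
proof (rule partition_onI)
  show "\<Union>(P \<union> Q) = A \<union> B" using partition_onD1[OF P] partition_onD1[OF Q] by simp
  show "{} \<notin> P \<union> Q" using partition_onD3[OF P] partition_onD3[OF Q] by simp
  have cross: "disjnt p q" if "p \<in> P" "q \<in> Q" for p q
    using that partition_onD1[OF P] partition_onD1[OF Q] AB by (auto simp: disjnt_def)
  fix p q assume "p \<in> P \<union> Q" "q \<in> P \<union> Q" "p \<noteq> q"
  then consider "p \<in> P" "q \<in> P" | "p \<in> Q" "q \<in> Q" | "p \<in> P" "q \<in> Q" | "p \<in> Q" "q \<in> P"
    by blast
  then show "disjnt p q"
  proof cases
    case 1
    then show ?thesis using partition_onD2[OF P] \<open>p \<noteq> q\<close> by (simp add: disjoint_def disjnt_def)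
  next
    case 2
    then show ?thesis using partition_onD2[OF Q] \<open>p \<noteq> q\<close> by (simp add: disjoint_def disjnt_def)
  qed (use cross disjnt_sym in blast)+
qed

lemma block_of_eq:
  assumes "partition_on A P" "B \<in> P" "x \<in> B"
  shows "block_of x P = B"
proof -
  have "{C \<in> P. x \<in> C} = {B}"
    using partition_on_same_block[OF assms(1) _ assms(2) _ assms(3)] assms(2,3) by blast
  then show ?thesis by (simp add: block_of_def)
qed

lemma block_of_in:
  assumes "partition_on A P" "x \<in> A"
  shows "block_of x P \<in> P" "x \<in> block_of x P"
proof -
  obtain B where "B \<in> P" "x \<in> B" using assms partition_onD1 by blast
  then show "block_of x P \<in> P" "x \<in> block_of x P" using block_of_eq[OF assms(1)] by simp_all
qed

lemma block_of_outside: "partition_on A P \<Longrightarrow> x \<notin> A \<Longrightarrow> block_of x P = {}"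
  by (auto simp: block_of_def dest: partition_onD1)

lemma block_of_subset: "partition_on A P \<Longrightarrow> block_of x P \<subseteq> A"
  by (auto simp: block_of_def dest: partition_onD1)

lemma partition_on_Diff_block_of:
  assumes part: "partition_on A P"
  shows "partition_on (A - block_of x P) (P - {block_of x P})"
proof (cases "x \<in> A")
  case True
  note block = block_of_in(1)[OF part True]
  have "disjnt (block_of x P) (\<Union>(P - {block_of x P}))"
    using partition_onD2[OF part] block by (auto simp: disjoint_def disjnt_def)
  moreover have "insert (block_of x P) (P - {block_of x P}) = P" using block by blast
  ultimately show ?thesis using partition_on_insert[of "block_of x P" "P - {block_of x P}" A] part by simp
next
  case False
  then show ?thesis using block_of_outside[OF part False] partition_onD3[OF part] part by simp
qed

section \<open>Partitions of an interval with a distinguished first block\<close>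

definition nc_partitions :: "nat \<Rightarrow> nat \<Rightarrow> nat \<Rightarrow> nat set \<Rightarrow> nat set set set" where
  "nc_partitions k a b U = {P. partition_on {a..<b} P \<and> non_crossing P \<and>
     (\<forall>B\<in>P. a \<notin> B \<longrightarrow> k dvd card B) \<and> card (block_of a P) \<in> U}"

lemma nc_partitionsD:
  assumes "P \<in> nc_partitions k a b U"
  shows "partition_on {a..<b} P" "non_crossing P" "\<And>B. B \<in> P \<Longrightarrow> a \<notin> B \<Longrightarrow> k dvd card B"
    "card (block_of a P) \<in> U"
  using assms by (auto simp: nc_partitions_def)

lemma nc_partitions_in_UNIV: "P \<in> nc_partitions k a b U \<Longrightarrow> P \<in> nc_partitions k a b UNIV"
  by (simp add: nc_partitions_def)

lemma nc_partitions_iff_UNIV: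
  "P \<in> nc_partitions k a b U \<longleftrightarrow> P \<in> nc_partitions k a b UNIV \<and> card (block_of a P) \<in> U"
  by (simp add: nc_partitions_def)

lemma finite_nc_partitions: "finite (nc_partitions k a b U)"
proof (rule finite_subset)
  show "nc_partitions k a b U \<subseteq> {P. partition_on {a..<b} P}" by (auto simp: nc_partitions_def)
qed (simp add: finitely_many_partition_on)

lemma finite_block_of:
  assumes "P \<in> nc_partitions k a b U"
  shows "finite (block_of x P)"
  using block_of_subset[OF nc_partitionsD(1)[OF assms]] by (rule finite_subset) simp

lemma nc_partitions_dvd_iff:
  "P \<in> nc_partitions k a b {u. k dvd u} \<longleftrightarrow>
     partition_on {a..<b} P \<and> non_crossing P \<and> (\<forall>B\<in>P. k dvd card B)"
proof (cases "partition_on {a..<b} P")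
  case part: True
  have "k dvd card (block_of a P)" if "\<forall>B\<in>P. k dvd card B"
  proof (cases "a < b")
    case True
    then show ?thesis using that block_of_in(1)[OF part] by simp
  next
    case False
    then show ?thesis using block_of_outside[OF part] by simp
  qed
  moreover have "k dvd card B" if "k dvd card (block_of a P)" "B \<in> P" "a \<in> B" for B
    using that block_of_eq[OF part] by metis
  ultimately show ?thesis unfolding nc_partitions_def by blast
qed (simp add: nc_partitions_def)

lemma nc_partitions_image:
  assumes f: "strict_mono_on {a..<b} f" and img: "f ` {a..<b} = {a'..<b'}"
    and first: "a < b \<Longrightarrow> f a = a'" and P: "P \<in> nc_partitions k a b U"
  shows "(`) f ` P \<in> nc_partitions k a' b' U"
proof -
  note part = nc_partitionsD(1)[OF P]
  have inj: "inj_on f {a..<b}" using f by (rule strict_mono_on_imp_inj_on)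
  have card_image_block: "card (f ` B) = card B" if "B \<subseteq> {a..<b}" for B
    using inj_on_subset[OF inj that] by (rule card_image)
  have "partition_on (f ` {a..<b}) ((`) f ` P - {{}})" using partition_on_inj_image[OF part inj] .
  moreover have "{} \<notin> (`) f ` P" using partition_onD3[OF part] by auto
  ultimately have part': "partition_on {a'..<b'} ((`) f ` P)" using img by simp
  have "non_crossing ((`) f ` P)"
    using non_crossing_image_strict_mono nc_partitionsD(2)[OF P] f partition_onD1[OF part] by metis
  moreover have "k dvd card B'" if B': "B' \<in> (`) f ` P" "a' \<notin> B'" for B'
  proof -
    obtain B where B: "B \<in> P" "B' = f ` B" using B'(1) by blast
    have sub: "B \<subseteq> {a..<b}" using B(1) partition_onD1[OF part] by blast
    have "a \<notin> B" using sub B'(2) first B(2) by force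
    then show ?thesis using nc_partitionsD(3)[OF P B(1)] card_image_block[OF sub] B(2) by simp
  qed
  moreover have "block_of a' ((`) f ` P) = f ` block_of a P"
  proof (cases "a < b")
    case True
    then have "block_of a P \<in> P" "a \<in> block_of a P" using block_of_in[OF part] by auto
    then show ?thesis using block_of_eq[OF part'] first[OF True] by blast
  next
    case False
    then have "{a'..<b'} = {}" using img by auto
    then show ?thesis using block_of_outside[OF part] block_of_outside[OF part'] False by simp
  qed
  moreover have "card (f ` block_of a P) = card (block_of a P)"
    using card_image_block block_of_subset[OF part] by blast
  ultimately show ?thesis using part' nc_partitionsD(4)[OF P] by (simp add: nc_partitions_def)
qed

lemma bij_betw_nc_partitions_shift:
  "bij_betw ((`) ((`) ((+) d))) (nc_partitions k a b U) (nc_partitions k (a + d) (b + d) U)"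
proof (rule bij_betw_byWitness[where f' = "(`) ((`) (\<lambda>x. x - d))"])
  have "(\<lambda>x. x - d) ` {a + d..<b + d} = {a..<b}"
    by (auto simp: image_iff intro!: bexI[where x = "_ + d"])
  moreover have "strict_mono_on {a + d..<b + d} (\<lambda>x. x - d)"
    by (auto simp: strict_mono_on_def)
  ultimately show "(`) ((`) (\<lambda>x. x - d)) ` nc_partitions k (a + d) (b + d) U \<subseteq> nc_partitions k a b U"
    using nc_partitions_image[where a = "a + d" and b = "b + d" and a' = a and b' = b] by auto
  have "(+) d ` {a..<b} = {a + d..<b + d}" "strict_mono_on {a..<b} ((+) d)"
    by (auto simp: strict_mono_on_def add.commute)
  then show "(`) ((`) ((+) d)) ` nc_partitions k a b U \<subseteq> nc_partitions k (a + d) (b + d) U"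
    using nc_partitions_image[where a = a and b = b and a' = "a + d" and b' = "b + d"] by auto
  show "\<forall>P\<in>nc_partitions k a b U. (`) (\<lambda>x. x - d) ` (`) ((+) d) ` P = P"
    by (simp add: image_image)
  have "(+) d ` (\<lambda>x. x - d) ` B = B" if "B \<subseteq> {a + d..<b + d}" for B
    using that by (force simp: image_image image_iff)
  moreover have "B \<subseteq> {a + d..<b + d}" if "Q \<in> nc_partitions k (a + d) (b + d) U" "B \<in> Q" for Q B
    using partition_onD1[OF nc_partitionsD(1)[OF that(1)]] that(2) by blast
  ultimately show "\<forall>Q\<in>nc_partitions k (a + d) (b + d) U. (`) ((+) d) ` (`) (\<lambda>x. x - d) ` Q = Q"
    by (simp add: image_image)
qed

lemma card_nc_partitions_shift:
  "a \<le> b \<Longrightarrow> card (nc_partitions k a b U) = card (nc_partitions k 0 (b - a) U)"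
  using bij_betw_same_card[OF bij_betw_nc_partitions_shift[of a k 0 "b - a" U]] by simp

lemma bij_betw_remove_first_singleton:
  assumes ab: "a < b"
  shows "bij_betw (\<lambda>P. P - {{a}}) (nc_partitions k a b {1}) (nc_partitions k (Suc a) b {u. k dvd u})"
proof (rule bij_betw_byWitness[where f' = "insert {a}"])
  have interval: "{a..<b} - {a} = {Suc a..<b}" by auto
  have first: "{a} \<in> P" if P: "P \<in> nc_partitions k a b {1}" for P
  proof -
    note part = nc_partitionsD(1)[OF P]
    have "block_of a P \<in> P" "a \<in> block_of a P" using block_of_in[OF part] ab by auto
    moreover have "card (block_of a P) = 1" using nc_partitionsD(4)[OF P] by simp
    ultimately show ?thesis by (metis card_1_singletonE singletonD)
  qed
  have outside: "a \<notin> \<Union>Q" if Q: "Q \<in> nc_partitions k (Suc a) b {u. k dvd u}" for Q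
  proof -
    have "\<Union>Q = {Suc a..<b}" using partition_onD1[OF nc_partitionsD(1)[OF Q]] by simp
    then show ?thesis by simp
  qed
  show "\<forall>P\<in>nc_partitions k a b {1}. insert {a} (P - {{a}}) = P" using first by blast
  show "\<forall>Q\<in>nc_partitions k (Suc a) b {u. k dvd u}. insert {a} Q - {{a}} = Q" using outside by blast
  show "(\<lambda>P. P - {{a}}) ` nc_partitions k a b {1} \<subseteq> nc_partitions k (Suc a) b {u. k dvd u}"
  proof clarify
    fix P assume P: "P \<in> nc_partitions k a b {1}"
    note part = nc_partitionsD(1)[OF P]
    have notin: "a \<notin> B" if "B \<in> P - {{a}}" for B
      using partition_on_same_block[OF part _ first[OF P]] that by blast
    have "partition_on {a..<b} (insert {a} (P - {{a}}))" using part first[OF P] by (simp add: insert_absorb)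
    then have "partition_on {Suc a..<b} (P - {{a}})"
      using partition_on_insert[of "{a}" "P - {{a}}"] notin interval by (auto simp: disjnt_def)
    moreover have "non_crossing (P - {{a}})" using non_crossing_subset[OF nc_partitionsD(2)[OF P]] by blast
    moreover have "\<forall>B\<in>P - {{a}}. k dvd card B" using nc_partitionsD(3)[OF P] notin by blast
    ultimately show "P - {{a}} \<in> nc_partitions k (Suc a) b {u. k dvd u}"
      by (simp add: nc_partitions_dvd_iff)
  qed
  show "insert {a} ` nc_partitions k (Suc a) b {u. k dvd u} \<subseteq> nc_partitions k a b {1}"
  proof clarify
    fix Q assume Q: "Q \<in> nc_partitions k (Suc a) b {u. k dvd u}"
    then have part: "partition_on {Suc a..<b} Q" and nc: "non_crossing Q" and dvd: "\<forall>B\<in>Q. k dvd card B"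
      by (simp_all add: nc_partitions_dvd_iff)
    have part': "partition_on {a..<b} (insert {a} Q)"
      using partition_on_insert[of "{a}" Q] outside[OF Q] part interval ab by (auto simp: disjnt_def)
    have "block_of a (insert {a} Q) = {a}" using block_of_eq[OF part'] by simp
    then show "insert {a} Q \<in> nc_partitions k a b {1}"
      using part' non_crossing_insert_singleton[OF nc] dvd by (simp add: nc_partitions_def)
  qed
qed

section \<open>Cutting at an element of the first block\<close>

definition merge_first :: "nat \<Rightarrow> nat \<Rightarrow> nat set set \<Rightarrow> nat set set \<Rightarrow> nat set set" where
  "merge_first a c R S = insert (block_of a R \<union> block_of c S)
     ((R - {block_of a R}) \<union> (S - {block_of c S}))"

context
  fixes k a b c :: nat and R S :: "nat set set"
  assumes ac: "a < c" and cb: "c \<le> b"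
    and R: "R \<in> nc_partitions k a c UNIV" and S: "S \<in> nc_partitions k c b UNIV"
begin

private lemma part_R: "partition_on {a..<c} R"
  using nc_partitionsD(1)[OF R] .

private lemma part_S: "partition_on {c..<b} S"
  using nc_partitionsD(1)[OF S] .

private lemma first_R: "block_of a R \<in> R" "a \<in> block_of a R"
  using block_of_in[OF part_R] ac by auto

private lemma first_S: "c < b \<Longrightarrow> block_of c S \<in> S \<and> c \<in> block_of c S"
  using block_of_in[OF part_S] by auto

private lemma sub_R: "X \<in> R \<Longrightarrow> X \<subseteq> {a..<c}"
  using partition_onD1[OF part_R] by blast

private lemma sub_S: "Y \<in> S \<Longrightarrow> Y \<subseteq> {c..<b}"
  using partition_onD1[OF part_S] by blast

private lemma first_sub: "block_of a R \<subseteq> {a..<c}" "block_of c S \<subseteq> {c..<b}"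
  using block_of_subset[OF part_R] block_of_subset[OF part_S] by auto

lemma mem_merge_first:
  "Z \<in> merge_first a c R S \<longleftrightarrow>
     Z = block_of a R \<union> block_of c S \<or> (Z \<in> R \<and> a \<notin> Z) \<or> (Z \<in> S \<and> c \<notin> Z)"
proof -
  have "Z \<in> R - {block_of a R} \<longleftrightarrow> Z \<in> R \<and> a \<notin> Z"
    using block_of_eq[OF part_R, of Z a] first_R by blast
  moreover have "Z \<in> S - {block_of c S} \<longleftrightarrow> Z \<in> S \<and> c \<notin> Z"
  proof
    assume Z: "Z \<in> S \<and> c \<notin> Z"
    then obtain z where "z \<in> Z" using partition_onD3[OF part_S] by (metis ex_in_conv)
    then have "c < b" using sub_S Z by fastforce
    then show "Z \<in> S - {block_of c S}" using Z first_S by blast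
  qed (use block_of_eq[OF part_S, of Z c] in blast)
  ultimately show ?thesis unfolding merge_first_def by blast
qed

lemma partition_on_merge_first: "partition_on {a..<b} (merge_first a c R S)"
proof -
  let ?M = "block_of a R \<union> block_of c S"
  let ?rest = "(R - {block_of a R}) \<union> (S - {block_of c S})"
  have "partition_on (({a..<c} - block_of a R) \<union> ({c..<b} - block_of c S)) ?rest"
    by (rule partition_on_Un[OF partition_on_Diff_block_of[OF part_R] partition_on_Diff_block_of[OF part_S]])
      auto
  moreover have "{a..<b} - ?M = ({a..<c} - block_of a R) \<union> ({c..<b} - block_of c S)"
    using first_sub ac cb by auto
  moreover have "disjnt ?M (\<Union>?rest)"
  proof -
    have "\<Union>?rest = ({a..<c} - block_of a R) \<union> ({c..<b} - block_of c S)"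
      using partition_onD1[OF calculation(1)] by simp
    then show ?thesis using first_sub by (auto simp: disjnt_def)
  qed
  moreover have "{a..<c} \<subseteq> {a..<b}" "{c..<b} \<subseteq> {a..<b}" using ac cb by auto
  then have "?M \<subseteq> {a..<b}" using first_sub by blast
  moreover have "?M \<noteq> {}" using first_R(2) by blast
  ultimately show ?thesis unfolding merge_first_def using partition_on_insert by metis
qed

private lemma crossing_merged_block:
  assumes order: "x < y" "y < z" "z < w" and Y: "Y \<in> merge_first a c R S"
    and mem: "x \<in> block_of a R \<union> block_of c S" "z \<in> block_of a R \<union> block_of c S" "y \<in> Y" "w \<in> Y"
  shows "Y = block_of a R \<union> block_of c S"
proof -
  consider (merged) "Y = block_of a R \<union> block_of c S" | (left) "Y \<in> R" "a \<notin> Y" | (right) "Y \<in> S" "c \<notin> Y"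
    using Y unfolding mem_merge_first by blast
  then show ?thesis
  proof cases
    case merged
    then show ?thesis .
  next
    case left
    have "w < c" using sub_R[OF left(1)] mem(4) by auto
    then have "x \<in> block_of a R" "z \<in> block_of a R" using mem(1,2) first_sub(2) order by auto
    then have "block_of a R = Y"
      using non_crossingD[OF nc_partitionsD(2)[OF R] order first_R(1) left(1) _ _ mem(3,4)] by blast
    then show ?thesis using left(2) first_R(2) by blast
  next
    case right
    have "c \<le> y" using sub_S[OF right(1)] mem(3) by auto
    then have z: "z \<in> block_of c S" using mem(2) first_sub(1) order by auto
    then have "block_of c S \<in> S" "c \<in> block_of c S" using first_S first_sub(2) by auto
    moreover have "c < y" using \<open>c \<le> y\<close> right(2) mem(3) by (cases "c = y") auto
    ultimately have "block_of c S = Y"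
      using non_crossingD[OF nc_partitionsD(2)[OF S] _ order(2,3) _ right(1) _ z mem(3,4)] by blast
    then show ?thesis using right(2) \<open>c \<in> block_of c S\<close> by blast
  qed
qed

private lemma crossing_block_of_R:
  assumes order: "x < y" "y < z" "z < w" and X: "X \<in> R" "a \<notin> X" and Y: "Y \<in> merge_first a c R S"
    and mem: "x \<in> X" "z \<in> X" "y \<in> Y" "w \<in> Y"
  shows "X = Y"
proof -
  note nc_R = nc_partitionsD(2)[OF R]
  have "z < c" using sub_R[OF X(1)] mem(2) by auto
  consider (merged) "Y = block_of a R \<union> block_of c S" | (left) "Y \<in> R" | (right) "Y \<in> S"
    using Y unfolding mem_merge_first by blast
  then show ?thesis
  proof cases
    case merged
    then have y: "y \<in> block_of a R" using mem(3) \<open>z < c\<close> first_sub(2) order by auto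
    have "a < x" using sub_R[OF X(1)] mem(1) X(2) by (cases "a = x") auto
    then have "block_of a R = X"
      using non_crossingD[OF nc_R _ order(1,2) first_R(1) X(1) first_R(2) y mem(1,2)] by blast
    then show ?thesis using X(2) first_R(2) by blast
  next
    case left
    then show ?thesis using non_crossingD[OF nc_R order X(1) _ mem] by blast
  next
    case right
    then show ?thesis using sub_S[of Y] mem(3) order \<open>z < c\<close> by force
  qed
qed

private lemma crossing_block_of_S:
  assumes order: "x < y" "y < z" "z < w" and X: "X \<in> S" "c \<notin> X" and Y: "Y \<in> merge_first a c R S"
    and mem: "x \<in> X" "z \<in> X" "y \<in> Y" "w \<in> Y"
  shows "X = Y"
proof -
  note nc_S = nc_partitionsD(2)[OF S]
  have "c \<le> x" using sub_S[OF X(1)] mem(1) by auto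
  consider (merged) "Y = block_of a R \<union> block_of c S" | (left) "Y \<in> R" | (right) "Y \<in> S"
    using Y unfolding mem_merge_first by blast
  then show ?thesis
  proof cases
    case merged
    then have yw: "y \<in> block_of c S" "w \<in> block_of c S"
      using mem(3,4) \<open>c \<le> x\<close> first_sub(1) order by auto
    then have "block_of c S \<in> S" "c \<in> block_of c S" using first_S first_sub(2) by auto
    then have "X = block_of c S" using non_crossingD[OF nc_S order X(1) _ mem(1,2) yw] by blast
    then show ?thesis using X(2) \<open>c \<in> block_of c S\<close> by blast
  next
    case left
    then show ?thesis using sub_R[of Y] mem(4) order \<open>c \<le> x\<close> by force
  next
    case right
    then show ?thesis using non_crossingD[OF nc_S order X(1) _ mem] by blast
  qed
qed

lemma non_crossing_merge_first: "non_crossing (merge_first a c R S)"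
proof (rule non_crossingI)
  fix x y z w X Y
  assume order: "x < y" "y < z" "z < w" and X: "X \<in> merge_first a c R S"
    and Y: "Y \<in> merge_first a c R S" and mem: "x \<in> X" "z \<in> X" "y \<in> Y" "w \<in> Y"
  consider (merged) "X = block_of a R \<union> block_of c S" | (left) "X \<in> R" "a \<notin> X" | (right) "X \<in> S" "c \<notin> X"
    using X unfolding mem_merge_first by blast
  then show "X = Y"
  proof cases
    case merged
    then show ?thesis using crossing_merged_block[OF order Y] mem by simp
  next
    case left
    then show ?thesis using crossing_block_of_R[OF order _ _ Y mem] by blast
  next
    case right
    then show ?thesis using crossing_block_of_S[OF order _ _ Y mem] by blast
  qed
qed

lemma block_of_merge_first: "block_of a (merge_first a c R S) = block_of a R \<union> block_of c S"
  using block_of_eq[OF partition_on_merge_first] first_R(2) unfolding merge_first_def by blast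

lemma card_block_of_merge_first:
  "card (block_of a (merge_first a c R S)) = card (block_of a R) + card (block_of c S)"
proof -
  have "{a..<c} \<inter> {c..<b} = {}" by auto
  then have "block_of a R \<inter> block_of c S = {}" using first_sub by blast
  then show ?thesis
    unfolding block_of_merge_first using finite_block_of[OF R] finite_block_of[OF S] by (simp add: card_Un_disjoint)
qed

lemma block_of_merge_first_Int: "block_of a (merge_first a c R S) \<inter> {a..<c} = block_of a R"
proof -
  have "{a..<c} \<inter> {c..<b} = {}" by auto
  then show ?thesis unfolding block_of_merge_first using first_sub by blast
qed

lemma cut_block_of_merge_first: "c \<in> block_of a (merge_first a c R S) \<or> c = b"
  unfolding block_of_merge_first using first_S cb by (cases "c < b") auto

lemma merge_first_in_nc_partitions: "merge_first a c R S \<in> nc_partitions k a b UNIV"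
proof -
  have "k dvd card Z" if "Z \<in> merge_first a c R S" "a \<notin> Z" for Z
    using that first_R(2) nc_partitionsD(3)[OF R] nc_partitionsD(3)[OF S]
    unfolding mem_merge_first by blast
  then show ?thesis
    using partition_on_merge_first non_crossing_merge_first by (simp add: nc_partitions_def)
qed

lemma restrict_merge_first:
  "restrict_partition (merge_first a c R S) {a..<c} = R"
  "restrict_partition (merge_first a c R S) {c..<b} = S"
proof -
  let ?R' = "R - {block_of a R}" and ?S' = "S - {block_of c S}"
  have R': "(\<inter>) {a..<c} ` ?R' = ?R'" using sub_R by (intro image_Int_self) blast
  have M: "{a..<c} \<inter> (block_of a R \<union> block_of c S) = block_of a R" using first_sub by auto
  have "{a..<c} \<inter> Y = {}" if "Y \<in> S" for Y using sub_S[OF that] by auto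
  then have "(\<inter>) {a..<c} ` ?S' \<subseteq> {{}}" by blast
  then have "insert (block_of a R) (?R' \<union> (\<inter>) {a..<c} ` ?S') - {{}} = insert (block_of a R) ?R' - {{}}"
    by auto
  then have "restrict_partition (merge_first a c R S) {a..<c} = insert (block_of a R) ?R' - {{}}"
    unfolding restrict_partition_def merge_first_def image_insert image_Un R' M .
  also have "\<dots> = R" using first_R(1) partition_onD3[OF part_R] by blast
  finally show "restrict_partition (merge_first a c R S) {a..<c} = R" .
  have S': "(\<inter>) {c..<b} ` ?S' = ?S'" using sub_S by (intro image_Int_self) blast
  have M: "{c..<b} \<inter> (block_of a R \<union> block_of c S) = block_of c S" using first_sub by auto
  have "{c..<b} \<inter> X = {}" if "X \<in> R" for X using sub_R[OF that] by auto
  then have "(\<inter>) {c..<b} ` ?R' \<subseteq> {{}}" by blast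
  then have "insert (block_of c S) ((\<inter>) {c..<b} ` ?R' \<union> ?S') - {{}} = insert (block_of c S) ?S' - {{}}"
    by auto
  then have "restrict_partition (merge_first a c R S) {c..<b} = insert (block_of c S) ?S' - {{}}"
    unfolding restrict_partition_def merge_first_def image_insert image_Un S' M .
  also have "\<dots> = S"
  proof (cases "c < b")
    case True
    then show ?thesis using first_S partition_onD3[OF part_S] by blast
  next
    case False
    then show ?thesis using block_of_outside[OF part_S, of c] partition_onD3[OF part_S] by auto
  qed
  finally show "restrict_partition (merge_first a c R S) {c..<b} = S" .
qed

end

context
  fixes k a b c :: nat and P :: "nat set set"
  assumes ac: "a < c" and cb: "c \<le> b" and P: "P \<in> nc_partitions k a b UNIV"
    and cut: "c \<in> block_of a P \<or> c = b"
begin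

private lemma part_P: "partition_on {a..<b} P"
  using nc_partitionsD(1)[OF P] .

private lemma first_P: "block_of a P \<in> P" "a \<in> block_of a P"
  using block_of_in[OF part_P] ac cb by auto

private lemma sub_P: "X \<in> P \<Longrightarrow> X \<subseteq> {a..<b}"
  using partition_onD1[OF part_P] by blast

private lemma other_block: "X \<in> P \<Longrightarrow> X \<noteq> block_of a P \<Longrightarrow> x \<in> X \<Longrightarrow> x \<notin> block_of a P"
  using partition_on_same_block[OF part_P _ first_P(1)] by blast

lemma block_within_cut:
  assumes X: "X \<in> P" "X \<noteq> block_of a P"
  shows "X \<subseteq> {a..<c} \<or> X \<subseteq> {c..<b}"
proof (rule ccontr)
  assume "\<not> ?thesis"
  then obtain x y where xy: "x \<in> X" "y \<in> X" "x < c" "c \<le> y" using sub_P[OF X(1)] by fastforce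
  have "y < b" using sub_P[OF X(1)] xy(2) by auto
  then have c: "c \<in> block_of a P" using cut xy(4) by auto
  then have "c < y" using xy(2,4) other_block[OF X] by (cases "c = y") auto
  moreover have "a < x" using sub_P[OF X(1)] xy(1) other_block[OF X] first_P(2) by (cases "a = x") auto
  ultimately have "block_of a P = X"
    using non_crossingD[OF nc_partitionsD(2)[OF P] _ xy(3) _ first_P(1) X(1) first_P(2) c xy(1,2)] by blast
  then show False using X(2) by simp
qed

lemma mem_restrict_left:
  "Z \<in> restrict_partition P {a..<c} \<longleftrightarrow>
     Z = block_of a P \<inter> {a..<c} \<or> (Z \<in> P \<and> Z \<noteq> block_of a P \<and> Z \<subseteq> {a..<c})"
proof
  assume "Z \<in> restrict_partition P {a..<c}"
  then obtain X where X: "X \<in> P" "Z = {a..<c} \<inter> X" "Z \<noteq> {}" by (auto simp: restrict_partition_def)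
  show "Z = block_of a P \<inter> {a..<c} \<or> (Z \<in> P \<and> Z \<noteq> block_of a P \<and> Z \<subseteq> {a..<c})"
  proof (cases "X = block_of a P")
    case False
    then have "X \<subseteq> {a..<c}" using block_within_cut[OF X(1)] X(2,3) by auto
    then show ?thesis using X False by (simp add: Int_absorb1)
  qed (use X in auto)
next
  assume "Z = block_of a P \<inter> {a..<c} \<or> (Z \<in> P \<and> Z \<noteq> block_of a P \<and> Z \<subseteq> {a..<c})"
  moreover have "block_of a P \<inter> {a..<c} \<noteq> {}" using first_P(2) ac by auto
  moreover have "Z \<noteq> {}" if "Z \<in> P" using partition_onD3[OF part_P] that by auto
  ultimately show "Z \<in> restrict_partition P {a..<c}"
    unfolding restrict_partition_def using first_P(1) by (auto simp: Int_absorb1 Int_commute)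
qed

lemma mem_restrict_right:
  "Z \<in> restrict_partition P {c..<b} \<longleftrightarrow>
     (c < b \<and> Z = block_of a P \<inter> {c..<b}) \<or> (Z \<in> P \<and> Z \<noteq> block_of a P \<and> Z \<subseteq> {c..<b})"
proof
  assume "Z \<in> restrict_partition P {c..<b}"
  then obtain X where X: "X \<in> P" "Z = {c..<b} \<inter> X" "Z \<noteq> {}" by (auto simp: restrict_partition_def)
  then have "c < b" by auto
  show "(c < b \<and> Z = block_of a P \<inter> {c..<b}) \<or> (Z \<in> P \<and> Z \<noteq> block_of a P \<and> Z \<subseteq> {c..<b})"
  proof (cases "X = block_of a P")
    case False
    then have "X \<subseteq> {c..<b}" using block_within_cut[OF X(1)] X(2,3) by auto
    then show ?thesis using X False by (simp add: Int_absorb1)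
  qed (use X \<open>c < b\<close> in auto)
next
  assume "(c < b \<and> Z = block_of a P \<inter> {c..<b}) \<or> (Z \<in> P \<and> Z \<noteq> block_of a P \<and> Z \<subseteq> {c..<b})"
  moreover have "block_of a P \<inter> {c..<b} \<noteq> {}" if "c < b" using cut that by auto
  moreover have "Z \<noteq> {}" if "Z \<in> P" using partition_onD3[OF part_P] that by auto
  ultimately show "Z \<in> restrict_partition P {c..<b}"
    unfolding restrict_partition_def using first_P(1) by (auto simp: Int_absorb1 Int_commute)
qed

lemma restrict_left_in_nc_partitions: "restrict_partition P {a..<c} \<in> nc_partitions k a c UNIV"
proof -
  have "{a..<c} \<inter> {a..<b} = {a..<c}" using cb by auto
  then have "partition_on {a..<c} (restrict_partition P {a..<c})"
    using partition_on_restrict[OF part_P, of "{a..<c}"] by (simp add: restrict_partition_def)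
  moreover have "k dvd card Z" if "Z \<in> restrict_partition P {a..<c}" "a \<notin> Z" for Z
    using that first_P(2) ac nc_partitionsD(3)[OF P] unfolding mem_restrict_left by auto
  ultimately show ?thesis
    using non_crossing_restrict_partition[OF nc_partitionsD(2)[OF P]] by (simp add: nc_partitions_def)
qed

lemma restrict_right_in_nc_partitions: "restrict_partition P {c..<b} \<in> nc_partitions k c b UNIV"
proof -
  have "{c..<b} \<inter> {a..<b} = {c..<b}" using ac by auto
  then have "partition_on {c..<b} (restrict_partition P {c..<b})"
    using partition_on_restrict[OF part_P, of "{c..<b}"] by (simp add: restrict_partition_def)
  moreover have "k dvd card Z" if "Z \<in> restrict_partition P {c..<b}" "c \<notin> Z" for Z
  proof -
    have "Z \<in> P" "Z \<noteq> block_of a P" using that cut unfolding mem_restrict_right by auto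
    then show ?thesis using nc_partitionsD(3)[OF P] other_block first_P(2) by blast
  qed
  ultimately show ?thesis
    using non_crossing_restrict_partition[OF nc_partitionsD(2)[OF P]] by (simp add: nc_partitions_def)
qed

lemma block_of_restrict_left: "block_of a (restrict_partition P {a..<c}) = block_of a P \<inter> {a..<c}"
  using block_of_eq[OF nc_partitionsD(1)[OF restrict_left_in_nc_partitions]] first_P(2) ac
  unfolding mem_restrict_left by auto

lemma block_of_restrict_right: "block_of c (restrict_partition P {c..<b}) = block_of a P \<inter> {c..<b}"
proof (cases "c < b")
  case True
  then show ?thesis using block_of_eq[OF nc_partitionsD(1)[OF restrict_right_in_nc_partitions]] cut
    unfolding mem_restrict_right by auto
next
  case False
  then show ?thesis using block_of_outside[OF nc_partitionsD(1)[OF restrict_right_in_nc_partitions]] by auto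
qed

lemma merge_first_restrict:
  "merge_first a c (restrict_partition P {a..<c}) (restrict_partition P {c..<b}) = P"
proof (rule set_eqI)
  fix Z
  have "block_of a P \<inter> {a..<c} \<union> block_of a P \<inter> {c..<b} = block_of a P"
    using sub_P[OF first_P(1)] cb by auto
  then have "Z \<in> merge_first a c (restrict_partition P {a..<c}) (restrict_partition P {c..<b}) \<longleftrightarrow>
      Z = block_of a P \<or> (Z \<in> restrict_partition P {a..<c} \<and> a \<notin> Z) \<or>
      (Z \<in> restrict_partition P {c..<b} \<and> c \<notin> Z)"
    using mem_merge_first[OF ac cb restrict_left_in_nc_partitions restrict_right_in_nc_partitions]
    by (simp add: block_of_restrict_left block_of_restrict_right)
  also have "\<dots> \<longleftrightarrow> Z = block_of a P \<or> (Z \<in> P \<and> Z \<noteq> block_of a P \<and> (Z \<subseteq> {a..<c} \<or> Z \<subseteq> {c..<b}))"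
    unfolding mem_restrict_left mem_restrict_right using first_P(2) ac cut other_block by auto
  also have "\<dots> \<longleftrightarrow> Z \<in> P" using block_within_cut first_P(1) by blast
  finally show "Z \<in> merge_first a c (restrict_partition P {a..<c}) (restrict_partition P {c..<b}) \<longleftrightarrow> Z \<in> P" .
qed

lemma card_block_of_cut:
  "card (block_of a P) = card (block_of a P \<inter> {a..<c}) + card (block_of a P \<inter> {c..<b})"
proof -
  have "block_of a P = (block_of a P \<inter> {a..<c}) \<union> (block_of a P \<inter> {c..<b})"
    using sub_P[OF first_P(1)] by auto
  moreover have "(block_of a P \<inter> {a..<c}) \<inter> (block_of a P \<inter> {c..<b}) = {}" by auto
  ultimately show ?thesis using finite_block_of[OF P] by (metis card_Un_disjoint finite_Int)
qed

end

lemma exists_elem_card_less: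
  fixes B :: "nat set"
  assumes "finite B" "s < card B"
  shows "\<exists>x\<in>B. card {y \<in> B. y < x} = s"
  using assms(2)
proof (induction s)
  case 0
  then have "B \<noteq> {}" by auto
  then have "Min B \<in> B" "{y \<in> B. y < Min B} = {}" using assms(1) by auto
  then show ?case by (metis card.empty)
next
  case (Suc s)
  then obtain x where x: "x \<in> B" "card {y \<in> B. y < x} = s" by auto
  define above where "above = {y \<in> B. x < y}"
  have fin: "finite above" using assms(1) by (simp add: above_def)
  have "B = {y \<in> B. y < x} \<union> insert x above" using x(1) by (auto simp: above_def)
  moreover have "card ({y \<in> B. y < x} \<union> insert x above) = s + Suc (card above)"
    using x(2) fin assms(1) by (subst card_Un_disjoint) (auto simp: above_def)
  ultimately have "above \<noteq> {}" using Suc.prems by auto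
  define x' where "x' = Min above"
  have x': "x' \<in> above" "\<And>y. y \<in> above \<Longrightarrow> x' \<le> y"
    using fin \<open>above \<noteq> {}\<close> by (auto simp: x'_def)
  have "{y \<in> B. y < x'} = insert x {y \<in> B. y < x}"
    using x'(1) x(1) x'(2) by (force simp: above_def)
  then have "card {y \<in> B. y < x'} = Suc s" using x assms(1) by simp
  then show ?case using x' by (auto simp: above_def)
qed

text \<open>Those partitions in which \<open>c\<close> is the \<open>(s+1)\<close>-st element of the first block,
  or \<open>c = b\<close> if the first block has exactly \<open>s\<close> elements.\<close>
definition nc_partitions_cut :: "nat \<Rightarrow> nat \<Rightarrow> nat \<Rightarrow> nat \<Rightarrow> nat set \<Rightarrow> nat \<Rightarrow> nat set set set" where
  "nc_partitions_cut k a b s U c = {P \<in> nc_partitions k a b ((+) s ` U).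
     card (block_of a P \<inter> {a..<c}) = s \<and> (c \<in> block_of a P \<or> c = b)}"

lemma bij_betw_nc_partitions_cut:
  assumes ac: "a < c" and cb: "c \<le> b"
  shows "bij_betw (\<lambda>P. (restrict_partition P {a..<c}, restrict_partition P {c..<b}))
    (nc_partitions_cut k a b s U c) (nc_partitions k a c {s} \<times> nc_partitions k c b U)"
proof (rule bij_betw_byWitness[where f' = "\<lambda>(R, S). merge_first a c R S"])
  show "\<forall>P\<in>nc_partitions_cut k a b s U c.
      (\<lambda>(R, S). merge_first a c R S) (restrict_partition P {a..<c}, restrict_partition P {c..<b}) = P"
    using merge_first_restrict[OF ac cb nc_partitions_in_UNIV] by (auto simp: nc_partitions_cut_def)
  show "\<forall>RS\<in>nc_partitions k a c {s} \<times> nc_partitions k c b U.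
      (\<lambda>P. (restrict_partition P {a..<c}, restrict_partition P {c..<b})) ((\<lambda>(R, S). merge_first a c R S) RS) = RS"
    using restrict_merge_first[OF ac cb nc_partitions_in_UNIV nc_partitions_in_UNIV] by auto
  show "(\<lambda>P. (restrict_partition P {a..<c}, restrict_partition P {c..<b})) ` nc_partitions_cut k a b s U c
      \<subseteq> nc_partitions k a c {s} \<times> nc_partitions k c b U"
  proof (rule image_subsetI)
    fix P assume "P \<in> nc_partitions_cut k a b s U c"
    then have P: "P \<in> nc_partitions k a b UNIV" and cut: "c \<in> block_of a P \<or> c = b"
      and left: "card (block_of a P \<inter> {a..<c}) = s" and total: "card (block_of a P) \<in> (+) s ` U"
      by (auto simp: nc_partitions_cut_def nc_partitions_iff_UNIV[of _ _ _ _ "(+) s ` U"])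
    have "card (block_of c (restrict_partition P {c..<b})) = card (block_of a P) - s"
      using card_block_of_cut[OF ac cb P cut] block_of_restrict_right[OF ac cb P cut] left by simp
    then have "card (block_of c (restrict_partition P {c..<b})) \<in> U" using total by auto
    moreover have "card (block_of a (restrict_partition P {a..<c})) = s"
      using block_of_restrict_left[OF ac cb P cut] left by simp
    ultimately show "(restrict_partition P {a..<c}, restrict_partition P {c..<b})
        \<in> nc_partitions k a c {s} \<times> nc_partitions k c b U"
      using restrict_left_in_nc_partitions[OF ac cb P cut] restrict_right_in_nc_partitions[OF ac cb P cut]
      by (simp_all add: nc_partitions_iff_UNIV[of _ _ _ _ U] nc_partitions_iff_UNIV[of _ _ _ _ "{s}"])
  qed
  show "(\<lambda>(R, S). merge_first a c R S) ` (nc_partitions k a c {s} \<times> nc_partitions k c b U)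
      \<subseteq> nc_partitions_cut k a b s U c"
  proof clarify
    fix R S assume "R \<in> nc_partitions k a c {s}" "S \<in> nc_partitions k c b U"
    then have R: "R \<in> nc_partitions k a c UNIV" and S: "S \<in> nc_partitions k c b UNIV"
      and sR: "card (block_of a R) = s" and sS: "card (block_of c S) \<in> U"
      by (auto simp: nc_partitions_iff_UNIV[of _ _ _ _ U] nc_partitions_iff_UNIV[of _ _ _ _ "{s}"])
    then show "merge_first a c R S \<in> nc_partitions_cut k a b s U c"
      using merge_first_in_nc_partitions[OF ac cb R S] card_block_of_merge_first[OF ac cb R S]
        block_of_merge_first_Int[OF ac cb R S] cut_block_of_merge_first[OF ac cb R S]
      by (simp add: nc_partitions_cut_def nc_partitions_iff_UNIV[of _ _ _ _ "(+) s ` U"])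
  qed
qed

lemma nc_partitions_eq_Union_cut:
  assumes s: "0 < s"
  shows "nc_partitions k a b ((+) s ` U) = (\<Union>c\<in>{a<..b}. nc_partitions_cut k a b s U c)"
proof
  show "(\<Union>c\<in>{a<..b}. nc_partitions_cut k a b s U c) \<subseteq> nc_partitions k a b ((+) s ` U)"
    by (auto simp: nc_partitions_cut_def)
  show "nc_partitions k a b ((+) s ` U) \<subseteq> (\<Union>c\<in>{a<..b}. nc_partitions_cut k a b s U c)"
  proof
    fix P assume P: "P \<in> nc_partitions k a b ((+) s ` U)"
    note part = nc_partitionsD(1)[OF P]
    define B where "B = block_of a P"
    obtain u where u: "card B = s + u" using nc_partitionsD(4)[OF P] by (auto simp: B_def)
    then have "B \<noteq> {}" using s by auto
    then have "a < b" using block_of_outside[OF part] by (auto simp: B_def)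
    have sub: "B \<subseteq> {a..<b}" using block_of_subset[OF part] by (simp add: B_def)
    show "P \<in> (\<Union>c\<in>{a<..b}. nc_partitions_cut k a b s U c)"
    proof (cases "u = 0")
      case True
      then have "card (B \<inter> {a..<b}) = s" using u sub by (simp add: Int_absorb2)
      then show ?thesis using P \<open>a < b\<close> by (auto simp: nc_partitions_cut_def B_def)
    next
      case False
      then have "s < card B" using u by simp
      then obtain x where x: "x \<in> B" "card {y \<in> B. y < x} = s"
        using exists_elem_card_less[OF finite_block_of[OF P]] by (auto simp: B_def)
      then have "{y \<in> B. y < x} \<noteq> {}" using s by (metis card.empty less_irrefl)
      then obtain y where "y \<in> B" "y < x" by blast
      then have "a < x" "x \<le> b" using sub x(1) by auto
      moreover have "B \<inter> {a..<x} = {y \<in> B. y < x}" using sub by auto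
      then have "P \<in> nc_partitions_cut k a b s U x" using P x by (simp add: nc_partitions_cut_def B_def)
      ultimately show ?thesis by auto
    qed
  qed
qed

lemma nc_partitions_cut_disjoint:
  assumes "c1 \<in> {a<..b}" "c2 \<in> {a<..b}" "c1 \<noteq> c2"
  shows "nc_partitions_cut k a b s U c1 \<inter> nc_partitions_cut k a b s U c2 = {}"
proof -
  have False if "c1 < c2" "c2 \<le> b" "a < c1"
    "P \<in> nc_partitions_cut k a b s U c1" "P \<in> nc_partitions_cut k a b s U c2" for c1 c2 P
  proof -
    have P: "P \<in> nc_partitions k a b ((+) s ` U)" and c1: "c1 \<in> block_of a P \<or> c1 = b"
      and s1: "card (block_of a P \<inter> {a..<c1}) = s" and s2: "card (block_of a P \<inter> {a..<c2}) = s"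
      using that(4,5) by (auto simp: nc_partitions_cut_def)
    have "c1 \<in> block_of a P" using c1 that(1,2) by auto
    then have "block_of a P \<inter> {a..<c1} \<subset> block_of a P \<inter> {a..<c2}" using that(1,3) by auto
    then have "card (block_of a P \<inter> {a..<c1}) < card (block_of a P \<inter> {a..<c2})"
      using finite_block_of[OF P] by (intro psubset_card_mono) auto
    then show False using s1 s2 by simp
  qed
  then show ?thesis using assms by (auto simp: disjoint_iff elim!: linorder_neqE_nat)
qed

lemma card_nc_partitions_split:
  assumes "0 < s"
  shows "card (nc_partitions k a b ((+) s ` U)) =
    (\<Sum>c\<in>{a<..b}. card (nc_partitions k a c {s}) * card (nc_partitions k c b U))"
proof -
  have "finite (nc_partitions_cut k a b s U c)" for c
  proof (rule finite_subset)
    show "nc_partitions_cut k a b s U c \<subseteq> nc_partitions k a b ((+) s ` U)"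
      by (auto simp: nc_partitions_cut_def)
  qed (rule finite_nc_partitions)
  then have "\<forall>c\<in>{a<..b}. finite (nc_partitions_cut k a b s U c)" by blast
  moreover have "\<forall>c\<in>{a<..b}. \<forall>c'\<in>{a<..b}. c \<noteq> c' \<longrightarrow>
      nc_partitions_cut k a b s U c \<inter> nc_partitions_cut k a b s U c' = {}"
    using nc_partitions_cut_disjoint by blast
  ultimately have "card (nc_partitions k a b ((+) s ` U)) = (\<Sum>c\<in>{a<..b}. card (nc_partitions_cut k a b s U c))"
    unfolding nc_partitions_eq_Union_cut[OF assms] by (intro card_UN_disjoint) simp_all
  also have "\<dots> = (\<Sum>c\<in>{a<..b}. card (nc_partitions k a c {s}) * card (nc_partitions k c b U))"
  proof (rule sum.cong)
    fix c assume "c \<in> {a<..b}"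
    then have "card (nc_partitions_cut k a b s U c) = card (nc_partitions k a c {s} \<times> nc_partitions k c b U)"
      by (intro bij_betw_same_card[OF bij_betw_nc_partitions_cut]) auto
    then show "card (nc_partitions_cut k a b s U c) = card (nc_partitions k a c {s}) * card (nc_partitions k c b U)"
      by (simp add: card_cartesian_product)
  qed simp
  finally show ?thesis .
qed

section \<open>Counting recursions\<close>

lemma non_crossing_empty [simp]: "non_crossing {}"
  by (simp add: non_crossing_def)

lemma block_of_empty [simp]: "block_of x {} = {}"
  by (simp add: block_of_def)

lemma nc_partitions_empty_interval: "nc_partitions k a a U = (if 0 \<in> U then {{}} else {})"
  by (auto simp: nc_partitions_def partition_on_empty)

lemma card_block_of_first_pos:
  assumes "P \<in> nc_partitions k a b U" "a < b"
  shows "0 < card (block_of a P)"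
proof -
  have "a \<in> block_of a P" using block_of_in(2)[OF nc_partitionsD(1)[OF assms(1)]] assms(2) by simp
  then show ?thesis using finite_block_of[OF assms(1)] card_gt_0_iff by blast
qed

lemma nc_partitions_first_zero:
  assumes "a < b"
  shows "nc_partitions k a b {0} = {}"
proof -
  have False if "P \<in> nc_partitions k a b {0}" for P
    using card_block_of_first_pos[OF that assms] nc_partitionsD(4)[OF that] by simp
  then show ?thesis by blast
qed

lemma nc_partitions_dvd_eq_shift:
  assumes "0 < k" "a < b"
  shows "nc_partitions k a b {u. k dvd u} = nc_partitions k a b ((+) k ` {u. k dvd u})"
proof -
  have shift: "u \<in> (+) k ` {u. k dvd u} \<longleftrightarrow> k dvd u" if "0 < u" for u
  proof
    assume "k dvd u"
    then have "u = k + (u - k)" "k dvd u - k" using that dvd_imp_le by (auto intro: dvd_diff_nat)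
    then show "u \<in> (+) k ` {u. k dvd u}" by blast
  qed auto
  show ?thesis
  proof (rule set_eqI)
    fix P
    show "P \<in> nc_partitions k a b {u. k dvd u} \<longleftrightarrow> P \<in> nc_partitions k a b ((+) k ` {u. k dvd u})"
      unfolding nc_partitions_iff_UNIV[of P k a b "{u. k dvd u}"]
        nc_partitions_iff_UNIV[of P k a b "(+) k ` {u. k dvd u}"]
      using shift card_block_of_first_pos[OF _ assms(2), of P k UNIV] by auto
  qed
qed

definition nc_count :: "nat \<Rightarrow> nat \<Rightarrow> nat" where
  "nc_count k L = card (nc_partitions k 0 L {u. k dvd u})"

definition nc_count_first :: "nat \<Rightarrow> nat \<Rightarrow> nat \<Rightarrow> nat" where
  "nc_count_first k s L = card (nc_partitions k 0 L {s})"

lemma nc_count_0: "nc_count k 0 = 1"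
  by (simp add: nc_count_def nc_partitions_empty_interval)

lemma nc_count_first_0: "nc_count_first k s 0 = (if s = 0 then 1 else 0)"
  by (simp add: nc_count_first_def nc_partitions_empty_interval)

lemma nc_count_first_zero_Suc: "nc_count_first k 0 (Suc L) = 0"
  by (simp add: nc_count_first_def nc_partitions_first_zero)

lemma nc_count_first_Suc:
  "nc_count_first k (Suc s) (Suc L) = (\<Sum>i=0..L. nc_count k i * nc_count_first k s (L - i))"
proof -
  have singleton: "card (nc_partitions k 0 c {Suc 0}) = nc_count k (c - 1)" if "0 < c" for c
    using bij_betw_same_card[OF bij_betw_remove_first_singleton[OF that]]
      card_nc_partitions_shift[of 1 c] that by (simp add: nc_count_def)
  have "nc_count_first k (Suc s) (Suc L) =
      (\<Sum>c\<in>{0<..Suc L}. card (nc_partitions k 0 c {1}) * card (nc_partitions k c (Suc L) {s}))"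
    using card_nc_partitions_split[of 1 k 0 "Suc L" "{s}"] by (simp add: nc_count_first_def)
  also have "\<dots> = (\<Sum>c\<in>{0<..Suc L}. nc_count k (c - 1) * nc_count_first k s (Suc L - c))"
    by (intro sum.cong) (simp_all add: singleton nc_count_first_def card_nc_partitions_shift[of _ "Suc L"])
  also have "\<dots> = (\<Sum>i=0..L. nc_count k i * nc_count_first k s (L - i))"
  proof -
    have shift: "{0<..Suc L} = {Suc 0..Suc L}" by auto
    show ?thesis unfolding shift sum.atLeast_Suc_atMost_Suc_shift by simp
  qed
  finally show ?thesis .
qed

lemma nc_count_Suc:
  assumes "0 < k"
  shows "nc_count k (Suc L) = (\<Sum>i=0..Suc L. nc_count_first k k i * nc_count k (Suc L - i))"
proof -
  have "nc_count k (Suc L) = (\<Sum>c\<in>{0<..Suc L}. card (nc_partitions k 0 c {k}) *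
      card (nc_partitions k c (Suc L) {u. k dvd u}))"
    using card_nc_partitions_split[OF assms, of k 0 "Suc L" "{u. k dvd u}"]
    by (simp add: nc_count_first_def nc_count_def nc_partitions_dvd_eq_shift[OF assms])
  also have "\<dots> = (\<Sum>c\<in>{0<..Suc L}. nc_count_first k k c * nc_count k (Suc L - c))"
    by (intro sum.cong) (simp_all add: nc_count_first_def nc_count_def card_nc_partitions_shift[of _ "Suc L"])
  also have "\<dots> = (\<Sum>i=0..Suc L. nc_count_first k k i * nc_count k (Suc L - i))"
  proof -
    have "{0..Suc L} = insert 0 {0<..Suc L}" by auto
    then show ?thesis using assms by (simp add: nc_count_first_0)
  qed
  finally show ?thesis .
qed

section \<open>Generating functions\<close>

definition nc_fps :: "nat \<Rightarrow> real fps" where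
  "nc_fps k = Abs_fps (\<lambda>L. real (nc_count k L))"

definition nc_first_fps :: "nat \<Rightarrow> nat \<Rightarrow> real fps" where
  "nc_first_fps k s = Abs_fps (\<lambda>L. real (nc_count_first k s L))"

lemma nc_first_fps_eq_power: "nc_first_fps k s = (fps_X * nc_fps k) ^ s"
proof (induction s)
  case 0
  show ?case
  proof (rule fps_ext)
    fix N show "nc_first_fps k 0 $ N = ((fps_X * nc_fps k) ^ 0) $ N"
      by (cases N) (simp_all add: nc_first_fps_def nc_count_first_0 nc_count_first_zero_Suc)
  qed
next
  case (Suc s)
  have "nc_first_fps k (Suc s) = fps_X * nc_fps k * nc_first_fps k s"
  proof (rule fps_ext)
    fix N show "nc_first_fps k (Suc s) $ N = (fps_X * nc_fps k * nc_first_fps k s) $ N"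
    proof (cases N)
      case 0
      then show ?thesis by (simp add: nc_first_fps_def nc_count_first_0)
    next
      case (Suc L)
      then have "(fps_X * nc_fps k * nc_first_fps k s) $ N = (nc_fps k * nc_first_fps k s) $ L"
        by (simp add: mult.assoc)
      also have "\<dots> = (\<Sum>i=0..L. real (nc_count k i) * real (nc_count_first k s (L - i)))"
        by (simp add: fps_mult_nth nc_fps_def nc_first_fps_def)
      finally show ?thesis using Suc by (simp add: nc_first_fps_def nc_count_first_Suc)
    qed
  qed
  then show ?case using Suc.IH by simp
qed

lemma nc_fps_functional_eq:
  assumes "0 < k"
  shows "nc_fps k = 1 + fps_X ^ k * nc_fps k ^ (k + 1)"
proof -
  have "nc_fps k = 1 + nc_first_fps k k * nc_fps k"
  proof (rule fps_ext)
    fix N show "nc_fps k $ N = (1 + nc_first_fps k k * nc_fps k) $ N"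
    proof (cases N)
      case 0
      then show ?thesis using assms by (simp add: nc_fps_def nc_first_fps_def nc_count_0 nc_count_first_0)
    next
      case (Suc L)
      then show ?thesis using nc_count_Suc[OF assms, of L]
        by (simp add: nc_fps_def nc_first_fps_def fps_mult_nth)
    qed
  qed
  then show ?thesis by (simp add: nc_first_fps_eq_power power_mult_distrib mult_ac)
qed

lemma fps_family_eqI:
  fixes F G :: "nat \<Rightarrow> 'a :: comm_ring_1 fps"
  assumes F: "\<And>s. 0 < s \<Longrightarrow> F s = F (s - 1) + fps_X ^ k * F (s + k)"
    and G: "\<And>s. 0 < s \<Longrightarrow> G s = G (s - 1) + fps_X ^ k * G (s + k)"
    and k: "0 < k" and base: "F 0 = G 0"
  shows "F s = G s"
proof -
  have "\<forall>s. F s $ N = G s $ N" for N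
  proof (induction N rule: less_induct)
    case (less N)
    show ?case
    proof
      fix s show "F s $ N = G s $ N"
      proof (induction s)
        case 0
        then show ?case using base by simp
      next
        case (Suc s)
        have "F (Suc s) $ N = F s $ N + (fps_X ^ k * F (Suc s + k)) $ N"
          using F[of "Suc s"] by simp
        also have "\<dots> = G s $ N + (fps_X ^ k * G (Suc s + k)) $ N"
          using Suc less k by (simp add: fps_X_power_mult_nth)
        also have "\<dots> = G (Suc s) $ N" using G[of "Suc s"] by simp
        finally show ?case .
      qed
    qed
  qed
  then show ?thesis by (intro fps_ext) auto
qed

text \<open>The coefficient of \<open>x\<^sup>k\<^sup>m\<close> in \<open>D\<^sup>s\<close>. For \<open>s > 0\<close> it equals
  \<open>s/(s+(k+1)m) \<cdot> (s+(k+1)m choose m)\<close>; the subtracted form used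
  here also gives the correct value at \<open>s = 0\<close>.\<close>
definition fuss_coeff :: "nat \<Rightarrow> nat \<Rightarrow> nat \<Rightarrow> real" where
  "fuss_coeff k s m = real ((s + (k + 1) * m) choose m) -
     (if m = 0 then 0 else real (k + 1) * real ((s + (k + 1) * m - 1) choose (m - 1)))"

definition fuss_fps :: "nat \<Rightarrow> nat \<Rightarrow> real fps" where
  "fuss_fps k s = Abs_fps (\<lambda>N. if k dvd N then fuss_coeff k s (N div k) else 0)"

lemma fuss_coeff_zero: "fuss_coeff k 0 m = (if m = 0 then 1 else 0)"
proof (cases m)
  case (Suc m')
  define N where "N = (k + 1) * Suc m' - 1"
  have N: "Suc N = (k + 1) * Suc m'" by (simp add: N_def)
  have "Suc m' * (Suc N choose Suc m') = Suc N * (N choose m')" by (rule Suc_times_binomial)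
  also have "\<dots> = Suc m' * ((k + 1) * (N choose m'))" unfolding N by (simp add: algebra_simps)
  finally have "real (Suc N choose Suc m') = real (k + 1) * real (N choose m')"
    by (metis mult_left_cancel nat.distinct(1) of_nat_mult)
  then show ?thesis using Suc N by (simp add: fuss_coeff_def N_def)
qed (simp add: fuss_coeff_def)

lemma fuss_coeff_Suc:
  assumes "0 < s"
  shows "fuss_coeff k s (Suc m) = fuss_coeff k (s - 1) (Suc m) + fuss_coeff k (s + k) m"
proof -
  define T where "T = s + k + (k + 1) * m"
  have "T \<ge> 1" using assms by (simp add: T_def)
  have eqs: "s + (k + 1) * Suc m = Suc T" "s - 1 + (k + 1) * Suc m = T" "s + k + (k + 1) * m = T"
    using assms by (simp_all add: T_def algebra_simps)
  have pascal: "real (T choose m) = real (T - 1 choose m) + (if m = 0 then 0 else real (T - 1 choose (m - 1)))"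
    using \<open>T \<ge> 1\<close> by (cases m; cases T) (simp_all add: binomial_Suc_Suc)
  show ?thesis
    unfolding fuss_coeff_def eqs using pascal by (cases "m = 0") (simp_all add: binomial_Suc_Suc algebra_simps)
qed

lemma fuss_fps_zero: "0 < k \<Longrightarrow> fuss_fps k 0 = 1"
  by (rule fps_ext) (auto simp: fuss_fps_def fuss_coeff_zero elim!: dvdE)

lemma fuss_fps_rec:
  assumes "0 < s" "0 < k"
  shows "fuss_fps k s = fuss_fps k (s - 1) + fps_X ^ k * fuss_fps k (s + k)"
proof (rule fps_ext)
  fix N
  show "fuss_fps k s $ N = (fuss_fps k (s - 1) + fps_X ^ k * fuss_fps k (s + k)) $ N"
  proof (cases "k dvd N")
    case True
    then obtain m where N: "N = k * m" by auto
    show ?thesis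
    proof (cases m)
      case 0
      then show ?thesis using assms N by (simp add: fuss_fps_def fps_X_power_mult_nth fuss_coeff_def)
    next
      case (Suc m')
      have "N - k = k * m'" using N Suc by (simp add: algebra_simps)
      then show ?thesis using assms N Suc fuss_coeff_Suc[OF assms(1), of k m']
        by (simp add: fuss_fps_def fps_X_power_mult_nth)
    qed
  next
    case False
    then have "\<not> k dvd (N - k)" if "k \<le> N" using that
      by (metis dvd_diff_nat dvd_refl le_add_diff_inverse2 dvd_add)
    then show ?thesis using False by (simp add: fuss_fps_def fps_X_power_mult_nth)
  qed
qed

lemma power_eq_fuss_fps:
  fixes D :: "real fps"
  assumes k: "0 < k" and D: "D = 1 + fps_X ^ k * D ^ (k + 1)"
  shows "D ^ s = fuss_fps k s"
proof (rule fps_family_eqI[OF _ _ k])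
  fix s :: nat assume "0 < s"
  then obtain s' where s: "s = Suc s'" by (cases s) auto
  have "D ^ Suc s' = D ^ s' * D" by simp
  also have "\<dots> = D ^ s' * (1 + fps_X ^ k * D ^ (k + 1))" by (simp only: D[symmetric])
  also have "\<dots> = D ^ s' + fps_X ^ k * D ^ (Suc s' + k)" by (simp add: algebra_simps power_add)
  finally show "D ^ s = D ^ (s - 1) + fps_X ^ k * D ^ (s + k)" by (simp add: s)
next
  fix s :: nat assume "0 < s"
  then show "fuss_fps k s = fuss_fps k (s - 1) + fps_X ^ k * fuss_fps k (s + k)"
    using fuss_fps_rec k by blast
qed (simp add: fuss_fps_zero k)

lemma fuss_coeff_closed_form:
  assumes "0 < s"
  shows "fuss_coeff k s m * real (s + (k + 1) * m) = real s * real ((s + (k + 1) * m) choose m)"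
proof (cases m)
  case (Suc m')
  define N where "N = s + (k + 1) * m"
  have "N * ((N - 1) choose m') = m * (N choose m)"
    using binomial_absorption[of m' N] Suc by simp
  then have absorb: "real N * real ((N - 1) choose m') = real m * real (N choose m)"
    by (metis of_nat_mult)
  have "fuss_coeff k s m * real N = real (N choose m) * real N - real (k + 1) * (real N * real ((N - 1) choose m'))"
    using Suc by (simp add: fuss_coeff_def N_def algebra_simps)
  also have "\<dots> = real (N choose m) * (real N - real (k + 1) * real m)"
    unfolding absorb by (simp add: algebra_simps)
  also have "real N - real (k + 1) * real m = real s" by (simp add: N_def algebra_simps)
  finally show ?thesis by (simp add: N_def mult.commute)
qed (simp add: fuss_coeff_def)

section \<open>Rotation and blocks of a given size\<close>

definition cyclic_succ :: "nat \<Rightarrow> nat \<Rightarrow> nat" where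
  "cyclic_succ L x = (if Suc x = L then 0 else Suc x)"

lemma inj_on_cyclic_succ: "inj_on (cyclic_succ L) {0..<L}"
  by (auto simp: inj_on_def cyclic_succ_def split: if_splits)

lemma image_cyclic_succ: "cyclic_succ L ` {0..<L} = {0..<L}"
  by (rule endo_inj_surj) (auto simp: cyclic_succ_def inj_on_cyclic_succ)

lemma non_crossing_image_cyclic_succ:
  assumes nc: "non_crossing P" and sub: "\<Union>P \<subseteq> {0..<L}"
  shows "non_crossing ((`) (cyclic_succ L) ` P)"
proof (rule non_crossingI)
  fix x y z w X Y
  assume order: "x < y" "y < z" "z < w" and X: "X \<in> (`) (cyclic_succ L) ` P"
    and Y: "Y \<in> (`) (cyclic_succ L) ` P" and mem: "x \<in> X" "z \<in> X" "y \<in> Y" "w \<in> Y"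
  obtain X0 where X0: "X0 \<in> P" "X = cyclic_succ L ` X0" using X by blast
  obtain Y0 where Y0: "Y0 \<in> P" "Y = cyclic_succ L ` Y0" using Y by blast
  obtain x0 z0 where x0: "x0 \<in> X0" "x = cyclic_succ L x0" and z0: "z0 \<in> X0" "z = cyclic_succ L z0"
    using mem(1,2) X0(2) by blast
  obtain y0 w0 where y0: "y0 \<in> Y0" "y = cyclic_succ L y0" and w0: "w0 \<in> Y0" "w = cyclic_succ L w0"
    using mem(3,4) Y0(2) by blast
  have "x0 < L" "y0 < L" "z0 < L" "w0 < L" using sub X0(1) Y0(1) x0(1) y0(1) z0(1) w0(1) by auto
  moreover have "y = Suc y0" "z = Suc z0" "w = Suc w0" "Suc y0 \<noteq> L" "Suc z0 \<noteq> L" "Suc w0 \<noteq> L"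
    using order y0(2) z0(2) w0(2) by (auto simp: cyclic_succ_def split: if_splits)
  ultimately consider "x = Suc x0" "x0 < y0" "y0 < z0" "z0 < w0" | "y0 < z0" "z0 < w0" "w0 < x0"
    using order x0(2) by (auto simp: cyclic_succ_def split: if_splits)
  then show "X = Y"
  proof cases
    case 1
    then show ?thesis using non_crossingD[OF nc _ _ _ X0(1) Y0(1) x0(1) z0(1) y0(1) w0(1)] X0 Y0 by blast
  next
    case 2
    \<comment> \<open>\<open>x\<close> is the rotated image of the last point \<open>L - 1\<close>, so the crossing moves to the other end.\<close>
    then show ?thesis using non_crossingD[OF nc _ _ _ Y0(1) X0(1) y0(1) w0(1) z0(1) x0(1)] X0 Y0 by blast
  qed
qed

definition rotate_partition :: "nat \<Rightarrow> nat set set \<Rightarrow> nat set set" where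
  "rotate_partition L P = (`) (cyclic_succ L) ` P"

lemma partition_on_rotate_partition:
  assumes part: "partition_on {0..<L} P"
  shows "partition_on {0..<L} (rotate_partition L P)"
proof -
  have "{} \<notin> rotate_partition L P" using partition_onD3[OF part] by (auto simp: rotate_partition_def)
  then show ?thesis using partition_on_inj_image[OF part inj_on_cyclic_succ]
    by (simp add: image_cyclic_succ rotate_partition_def)
qed

lemma rotate_partition_in_nc_partitions:
  assumes "P \<in> nc_partitions k 0 L {u. k dvd u}"
  shows "rotate_partition L P \<in> nc_partitions k 0 L {u. k dvd u}"
proof -
  have part: "partition_on {0..<L} P" and nc: "non_crossing P" and dvd: "\<forall>B\<in>P. k dvd card B"
    using assms by (simp_all add: nc_partitions_dvd_iff)
  have "card (cyclic_succ L ` B) = card B" if "B \<in> P" for B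
    using that partition_onD1[OF part] inj_on_subset[OF inj_on_cyclic_succ] by (metis Union_upper card_image)
  then have "\<forall>B\<in>rotate_partition L P. k dvd card B" using dvd by (auto simp: rotate_partition_def)
  moreover have "non_crossing (rotate_partition L P)"
    using non_crossing_image_cyclic_succ[OF nc] partition_onD1[OF part] by (simp add: rotate_partition_def)
  ultimately show ?thesis using partition_on_rotate_partition[OF part] by (simp add: nc_partitions_dvd_iff)
qed

lemma bij_betw_rotate_partition:
  "bij_betw (rotate_partition L) (nc_partitions k 0 L U) (rotate_partition L ` nc_partitions k 0 L U)"
proof -
  have "nc_partitions k 0 L U \<subseteq> Pow (Pow {0..<L})"
    using partition_onD1[OF nc_partitionsD(1)] by blast
  moreover have "inj_on ((`) ((`) (cyclic_succ L))) (Pow (Pow {0..<L}))"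
    using inj_on_image_Pow[OF inj_on_image_Pow[OF inj_on_cyclic_succ]] by simp
  ultimately show ?thesis
    unfolding bij_betw_def rotate_partition_def by (auto intro: inj_on_subset)
qed

lemma rotate_partition_nc_partitions:
  "rotate_partition L ` nc_partitions k 0 L {u. k dvd u} = nc_partitions k 0 L {u. k dvd u}"
  using endo_inj_surj[OF finite_nc_partitions] rotate_partition_in_nc_partitions
    bij_betw_rotate_partition[unfolded bij_betw_def] by blast

lemma block_of_rotate_partition:
  assumes part: "partition_on {0..<L} P" and x: "x < L"
  shows "block_of (cyclic_succ L x) (rotate_partition L P) = cyclic_succ L ` block_of x P"
proof -
  have "block_of x P \<in> P" "x \<in> block_of x P" using block_of_in[OF part] x by auto
  then have "cyclic_succ L ` block_of x P \<in> rotate_partition L P" "cyclic_succ L x \<in> cyclic_succ L ` block_of x P"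
    unfolding rotate_partition_def by simp_all
  then show ?thesis by (rule block_of_eq[OF partition_on_rotate_partition[OF part]])
qed

lemma card_first_block_rotation_invariant:
  assumes "x < L"
  shows "card {P \<in> nc_partitions k 0 L {u. k dvd u}. card (block_of x P) = j} =
    card {P \<in> nc_partitions k 0 L {u. k dvd u}. card (block_of 0 P) = j}"
  using assms
proof (induction x)
  case (Suc x)
  let ?NC = "nc_partitions k 0 L {u. k dvd u}"
  have card_eq: "card (block_of (Suc x) (rotate_partition L P)) = card (block_of x P)" if P: "P \<in> ?NC" for P
  proof -
    note part = nc_partitionsD(1)[OF P]
    have "cyclic_succ L x = Suc x" using Suc.prems by (simp add: cyclic_succ_def)
    then have "block_of (Suc x) (rotate_partition L P) = cyclic_succ L ` block_of x P"
      using block_of_rotate_partition[OF part, of x] Suc.prems by simp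
    then show ?thesis
      using inj_on_subset[OF inj_on_cyclic_succ block_of_subset[OF part]] by (simp add: card_image)
  qed
  have "{P \<in> ?NC. card (block_of (Suc x) P) = j} = rotate_partition L ` {P \<in> ?NC. card (block_of x P) = j}"
  proof (intro equalityI subsetI)
    fix Q assume Q: "Q \<in> {P \<in> ?NC. card (block_of (Suc x) P) = j}"
    then have "Q \<in> rotate_partition L ` ?NC" using rotate_partition_nc_partitions by simp
    then obtain P where "P \<in> ?NC" "Q = rotate_partition L P" by blast
    then show "Q \<in> rotate_partition L ` {P \<in> ?NC. card (block_of x P) = j}"
      using Q card_eq by auto
  next
    fix Q assume "Q \<in> rotate_partition L ` {P \<in> ?NC. card (block_of x P) = j}"
    then obtain P where "P \<in> ?NC" "card (block_of x P) = j" "Q = rotate_partition L P" by blast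
    then show "Q \<in> {P \<in> ?NC. card (block_of (Suc x) P) = j}"
      using card_eq rotate_partition_in_nc_partitions by simp
  qed
  moreover have "inj_on (rotate_partition L) {P \<in> ?NC. card (block_of x P) = j}"
    by (rule inj_on_subset[OF bij_betw_imp_inj_on[OF bij_betw_rotate_partition]]) auto
  ultimately show ?case using Suc by (simp add: card_image)
qed simp

lemma card_blocks_of_size:
  assumes part: "partition_on A P" and fin: "finite A"
  shows "card {B \<in> P. card B = j} * j = card {x \<in> A. card (block_of x P) = j}"
proof -
  have "{x \<in> A. card (block_of x P) = j} = \<Union>{B \<in> P. card B = j}"
  proof (intro equalityI subsetI)
    fix x assume "x \<in> {x \<in> A. card (block_of x P) = j}"
    then show "x \<in> \<Union>{B \<in> P. card B = j}" using block_of_in[OF part, of x] by auto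
  next
    fix x assume "x \<in> \<Union>{B \<in> P. card B = j}"
    then obtain B where "B \<in> P" "card B = j" "x \<in> B" by blast
    then show "x \<in> {x \<in> A. card (block_of x P) = j}"
      using block_of_eq[OF part] partition_onD1[OF part] by auto
  qed
  moreover have "card (\<Union>{B \<in> P. card B = j}) = sum card {B \<in> P. card B = j}"
  proof (rule card_Union_disjoint)
    show "pairwise disjnt {B \<in> P. card B = j}"
      using partition_onD2[OF part] by (auto simp: disjoint_def pairwise_def disjnt_def)
    show "finite B" if "B \<in> {B \<in> P. card B = j}" for B
    proof (rule finite_subset[OF _ fin])
      show "B \<subseteq> A" using that partition_onD1[OF part] by blast
    qed
  qed
  ultimately show ?thesis by simp
qed

lemma card_filter_eq_sum_of_bool: "finite A \<Longrightarrow> card {x \<in> A. p x} = (\<Sum>x\<in>A. of_bool (p x))"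
proof -
  assume "finite A"
  moreover have "{x \<in> A. p x} = A \<inter> {x. p x}" by blast
  ultimately show ?thesis by simp
qed

lemma sum_card_blocks_of_size:
  assumes "k dvd j"
  shows "(\<Sum>P\<in>nc_partitions k 0 L {u. k dvd u}. card {B \<in> P. card B = j}) * j = L * nc_count_first k j L"
proof -
  let ?NC = "nc_partitions k 0 L {u. k dvd u}"
  have first_block: "{P \<in> ?NC. card (block_of 0 P) = j} = nc_partitions k 0 L {j}"
  proof (intro equalityI subsetI)
    fix P assume "P \<in> {P \<in> ?NC. card (block_of 0 P) = j}"
    then have P: "P \<in> ?NC" and c: "card (block_of 0 P) = j" by auto
    show "P \<in> nc_partitions k 0 L {j}"
      using nc_partitions_in_UNIV[OF P] c nc_partitions_iff_UNIV[of P k 0 L "{j}"] by simp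
  next
    fix P assume P: "P \<in> nc_partitions k 0 L {j}"
    then have c: "card (block_of 0 P) = j" using nc_partitionsD(4) by blast
    have "P \<in> ?NC"
      using nc_partitions_in_UNIV[OF P] c assms nc_partitions_iff_UNIV[of P k 0 L "{u. k dvd u}"] by simp
    then show "P \<in> {P \<in> ?NC. card (block_of 0 P) = j}" using c by simp
  qed
  have "(\<Sum>P\<in>?NC. card {B \<in> P. card B = j}) * j = (\<Sum>P\<in>?NC. card {B \<in> P. card B = j} * j)"
    by (rule sum_distrib_right)
  also have "\<dots> = (\<Sum>P\<in>?NC. card {x \<in> {0..<L}. card (block_of x P) = j})"
  proof (rule sum.cong[OF refl])
    fix P assume "P \<in> ?NC"
    then show "card {B \<in> P. card B = j} * j = card {x \<in> {0..<L}. card (block_of x P) = j}"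
      by (rule card_blocks_of_size[OF nc_partitionsD(1) finite_atLeastLessThan])
  qed
  also have "\<dots> = (\<Sum>P\<in>?NC. \<Sum>x\<in>{0..<L}. of_bool (card (block_of x P) = j))"
    by (simp only: card_filter_eq_sum_of_bool finite_atLeastLessThan)
  also have "\<dots> = (\<Sum>x\<in>{0..<L}. \<Sum>P\<in>?NC. of_bool (card (block_of x P) = j))"
    by (rule sum.swap)
  also have "\<dots> = (\<Sum>x\<in>{0..<L}. card {P \<in> ?NC. card (block_of x P) = j})"
    by (simp only: card_filter_eq_sum_of_bool finite_nc_partitions)
  also have "\<dots> = (\<Sum>x\<in>{0..<L}. card (nc_partitions k 0 L {j}))"
  proof (rule sum.cong[OF refl])
    fix x assume "x \<in> {0..<L}"
    then show "card {P \<in> ?NC. card (block_of x P) = j} = card (nc_partitions k 0 L {j})"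
      using card_first_block_rotation_invariant[of x L k j] first_block by simp
  qed
  also have "\<dots> = L * nc_count_first k j L" by (simp add: nc_count_first_def)
  finally show ?thesis .
qed

section \<open>Blocks of size \<open>tk\<close> in \<open>NC\<^sup>k(n)\<close>\<close>

lemma noncrossing_partition_iff:
  "noncrossing_partition N P \<longleftrightarrow> partition_on {1..<N + 1} P \<and> non_crossing P"
proof -
  let ?crossing = "\<exists>a b c d B1 B2. 1 \<le> a \<and> a < b \<and> b < c \<and> c < d \<and> d \<le> N \<and>
      B1 \<in> P \<and> B2 \<in> P \<and> B1 \<noteq> B2 \<and> a \<in> B1 \<and> c \<in> B1 \<and> b \<in> B2 \<and> d \<in> B2"
  have interval: "{1..N} = {1..<N + 1}" by auto
  have "non_crossing P \<longleftrightarrow> \<not> ?crossing" if part: "partition_on {1..<N + 1} P"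
  proof
    assume no_crossing: "\<not> ?crossing"
    have bounds: "1 \<le> x \<and> x \<le> N" if "X \<in> P" "x \<in> X" for X x
    proof -
      have "x \<in> {1..<N + 1}" using that partition_onD1[OF part] by blast
      then show ?thesis by simp
    qed
    show "non_crossing P"
    proof (rule non_crossingI)
      fix x y z w X Y
      assume order: "x < y" "y < z" "z < w" and XY: "X \<in> P" "Y \<in> P"
        and mem: "x \<in> X" "z \<in> X" "y \<in> Y" "w \<in> Y"
      have "1 \<le> x" "w \<le> N" using bounds XY mem by blast+
      then show "X = Y" using no_crossing order XY mem by blast
    qed
  next
    assume nc: "non_crossing P"
    show "\<not> ?crossing"
    proof clarify
      fix a b c d B1 B2
      assume "1 \<le> a" "a < b" "b < c" "c < d" "d \<le> N" "B1 \<in> P" "B2 \<in> P" "B1 \<noteq> B2"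
        "a \<in> B1" "c \<in> B1" "b \<in> B2" "d \<in> B2"
      then show False using non_crossingD[OF nc, of a b c d B1 B2] by blast
    qed
  qed
  then show ?thesis unfolding noncrossing_partition_def interval by blast
qed

lemma NCk_eq_nc_partitions: "NCk k n = nc_partitions k 1 (k * n + 1) {u. k dvd u}"
  by (auto simp: NCk_def nc_partitions_dvd_iff noncrossing_partition_iff)

lemma card_blocks_of_size_image:
  assumes "inj f"
  shows "card {B \<in> (`) f ` P. card B = j} = card {B \<in> P. card B = j}"
proof -
  have "card (f ` B) = card B" for B using inj_on_subset[OF assms subset_UNIV] by (rule card_image)
  then have "{B \<in> (`) f ` P. card B = j} = (`) f ` {B \<in> P. card B = j}" by auto
  moreover have "inj ((`) f)" using assms by (simp add: inj_image_eq_iff inj_def)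
  then have "inj_on ((`) f) {B \<in> P. card B = j}" by (rule inj_on_subset) simp
  ultimately show ?thesis by (simp add: card_image)
qed

lemma nc_count_first_coeff:
  assumes "0 < k"
  shows "real (nc_count_first k s L) = (if L < s then 0 else fuss_fps k s $ (L - s))"
proof -
  have "nc_first_fps k s = fps_X ^ s * fuss_fps k s"
    using power_eq_fuss_fps[OF assms nc_fps_functional_eq[OF assms]]
    by (simp add: nc_first_fps_eq_power power_mult_distrib)
  then have "real (nc_count_first k s L) = (fps_X ^ s * fuss_fps k s) $ L"
    by (metis fps_nth_Abs_fps nc_first_fps_def)
  then show ?thesis by (simp add: fps_X_power_mult_nth)
qed

lemma card_NCk_Fuss_Catalan:
  assumes "0 < k"
  shows "real (card (NCk k n)) * real (n * k + 1) = real ((k + 1) * n choose n)"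
proof -
  define N where "N = (k + 1) * n"
  have "card (NCk k n) = nc_count k (k * n)"
    using bij_betw_same_card[OF bij_betw_nc_partitions_shift[of 1 k 0 "k * n" "{u. k dvd u}"]]
    by (simp add: NCk_eq_nc_partitions nc_count_def)
  moreover have "nc_fps k = fuss_fps k 1"
    using power_eq_fuss_fps[OF assms nc_fps_functional_eq[OF assms], of 1] by simp
  then have "nc_fps k $ (k * n) = fuss_fps k 1 $ (k * n)" by simp
  then have "real (nc_count k (k * n)) = fuss_coeff k 1 n"
    using assms by (simp add: nc_fps_def fuss_fps_def)
  moreover have "fuss_coeff k 1 n * real (N + 1) = real (N + 1 choose n)"
    using fuss_coeff_closed_form[of 1 k n] by (simp add: N_def add.commute)
  moreover have "(N + 1 - n) * (N + 1 choose n) = (N + 1) * (N choose n)"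
    using binomial_absorb_comp[of "N + 1" n] by simp
  then have "real (n * k + 1) * real (N + 1 choose n) = real (N + 1) * real (N choose n)"
    unfolding N_def by (simp add: algebra_simps flip: of_nat_mult)
  ultimately have "real (card (NCk k n)) * real (n * k + 1) * real (N + 1) = real (N choose n) * real (N + 1)"
    by (simp add: algebra_simps)
  then show ?thesis by (simp add: N_def del: of_nat_add)
qed

lemma sum_card_blocks_NCk_eq:
  "(\<Sum>\<pi>\<in>NCk k n. card {B \<in> \<pi>. card B = j}) =
    (\<Sum>P\<in>nc_partitions k 0 (k * n) {u. k dvd u}. card {B \<in> P. card B = j})"
proof -
  have bij: "bij_betw ((`) ((`) ((+) 1))) (nc_partitions k 0 (k * n) {u. k dvd u}) (NCk k n)"
    using bij_betw_nc_partitions_shift[of 1 k 0 "k * n" "{u. k dvd u}"] by (simp add: NCk_eq_nc_partitions)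
  have "inj ((+) (1::nat))" by simp
  then have "(\<Sum>P\<in>nc_partitions k 0 (k * n) {u. k dvd u}. card {B \<in> (`) ((+) 1) ` P. card B = j}) =
      (\<Sum>P\<in>nc_partitions k 0 (k * n) {u. k dvd u}. card {B \<in> P. card B = j})"
    by (intro sum.cong refl card_blocks_of_size_image)
  then show ?thesis using sum.reindex_bij_betw[OF bij, of "\<lambda>\<pi>. card {B \<in> \<pi>. card B = j}"] by simp
qed

lemma nc_count_first_multiple:
  assumes k: "0 < k"
  shows "real (nc_count_first k (t * k) (k * n)) = (if n < t then 0 else fuss_coeff k (t * k) (n - t))"
proof (cases "n < t")
  case True
  then have "k * n < t * k" using k by simp
  then show ?thesis using True by (simp add: nc_count_first_coeff[OF k])
next
  case False
  then have "k * n - t * k = k * (n - t)" by (simp add: algebra_simps diff_mult_distrib2)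
  then show ?thesis using False k by (simp add: nc_count_first_coeff[OF k] fuss_fps_def mult.commute)
qed

lemma binom_eq_choose:
  assumes k: "0 < k" and t: "0 < t" and tn: "t \<le> n"
  shows "binom (int (n * (k + 1)) - int t - 1) (int (n * k) - 1) = (t * k + (k + 1) * (n - t) - 1) choose (n - t)"
proof -
  define m where "m = n - t"
  define N where "N = t * k + (k + 1) * m"
  have n: "n = m + t" using tn by (simp add: m_def)
  have nk: "1 \<le> n * k" using k t by (simp add: n)
  have N: "N = m + n * k" "N + t = n * (k + 1)" by (simp_all add: N_def n algebra_simps)
  then have "1 \<le> N" using nk by linarith
  then have "int (N - 1) = int N - 1" by (simp add: of_nat_diff)
  moreover have "int (n * k - 1) = int (n * k) - 1" using nk by (simp add: of_nat_diff)
  moreover have "int (n * (k + 1)) = int N + int t" using N(2) by (simp flip: of_nat_add)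
  moreover have N1: "N - 1 = m + (n * k - 1)" using N(1) nk by simp
  ultimately have "int (n * (k + 1)) - int t - 1 = int (N - 1)" "int (n * k) - 1 = int (n * k - 1)"
    by simp_all
  then have "binom (int (n * (k + 1)) - int t - 1) (int (n * k) - 1) = (N - 1) choose (n * k - 1)"
    by (simp add: binom_def)
  also have "\<dots> = (N - 1) choose m"
  proof -
    have sym: "(N - 1) choose m = (N - 1) choose (N - 1 - m)" by (rule binomial_symmetric) (use N1 in simp)
    have diff: "N - 1 - m = n * k - 1" using N1 by simp
    show ?thesis unfolding sym diff ..
  qed
  finally show ?thesis by (simp add: N_def m_def)
qed

lemma sum_card_blocks_NCk:
  assumes k: "0 < k" and t: "0 < t"
  shows "(\<Sum>\<pi>\<in>NCk k n. real (card {B \<in> \<pi>. card B = t * k}))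
    = real (binom (int (n * (k + 1)) - int t - 1) (int (n * k) - 1))"
proof -
  define S where "S = (\<Sum>\<pi>\<in>NCk k n. card {B \<in> \<pi>. card B = t * k})"
  have "S * (t * k) = k * n * nc_count_first k (t * k) (k * n)"
    unfolding S_def sum_card_blocks_NCk_eq by (rule sum_card_blocks_of_size) simp
  then have blocks: "real S * real (t * k) = real (k * n) * real (nc_count_first k (t * k) (k * n))"
    by (simp only: of_nat_mult[symmetric])
  have "real S = real (binom (int (n * (k + 1)) - int t - 1) (int (n * k) - 1))"
  proof (cases "n < t")
    case True
    then have "\<not> int (n * k) - 1 \<le> int (n * (k + 1)) - int t - 1" by (simp add: algebra_simps)
    then show ?thesis using blocks True k t by (simp add: nc_count_first_multiple[OF k] binom_def)
  next
    case False
    define m where "m = n - t"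
    define N where "N = t * k + (k + 1) * m"
    have "0 < N" "0 < t * k" using k t by (simp_all add: N_def)
    have "n = m + t" using False by (simp add: m_def)
    then have N_m: "N - m = k * n" by (simp add: N_def algebra_simps)
    have first: "real (nc_count_first k (t * k) (k * n)) = fuss_coeff k (t * k) m"
      using nc_count_first_multiple[OF k] False by (simp add: m_def)
    have closed: "fuss_coeff k (t * k) m * real N = real (t * k) * real (N choose m)"
      unfolding N_def by (rule fuss_coeff_closed_form) (use k t in simp)
    have "(real S * real N) * real (t * k) = real (k * n) * (fuss_coeff k (t * k) m * real N)"
      using blocks unfolding first by (simp add: algebra_simps)
    also have "\<dots> = (real (N - m) * real (N choose m)) * real (t * k)"
      unfolding closed N_m by (simp add: algebra_simps)
    finally have "real S * real N = real (N - m) * real (N choose m)"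
      using \<open>0 < t * k\<close> by simp
    also have "\<dots> = real N * real ((N - 1) choose m)"
      using binomial_absorb_comp[of N m] by (simp only: of_nat_mult[symmetric])
    finally have "S = (N - 1) choose m" using \<open>0 < N\<close> by (simp add: mult.commute)
    then show ?thesis using binom_eq_choose[OF k t] False by (simp add: N_def m_def)
  qed
  then show ?thesis by (simp add: S_def)
qed

theorem corollary2p2:
  fixes k n t :: nat
  assumes "0 < k" and "0 < n" and "0 < t"
  shows "(\<Sum>\<pi>\<in>NCk k n. real (card {B \<in> \<pi>. card B = t * k})) / real (card (NCk k n))
         = real (n * k + 1) * real (binom (int (n * (k + 1)) - int t - 1) (int (n * k) - 1))
           / real (binom (int ((k + 1) * n)) (int n))"
proof -
  let ?C = "real (card (NCk k n))" and ?d = "real (n * k + 1)"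
    and ?B = "real (binom (int (n * (k + 1)) - int t - 1) (int (n * k) - 1))"
  have total: "real (binom (int ((k + 1) * n)) (int n)) = ?C * ?d"
    using card_NCk_Fuss_Catalan[OF assms(1)] unfolding binom_def nat_int by simp
  have "?C \<noteq> 0"
  proof
    assume "?C = 0"
    then have "real ((k + 1) * n choose n) = 0" using card_NCk_Fuss_Catalan[OF assms(1), of n] by simp
    moreover have "0 < (k + 1) * n choose n" by (rule zero_less_binomial) simp
    ultimately show False by simp
  qed
  have "?d * ?B / real (binom (int ((k + 1) * n)) (int n)) = (?B * ?d) / (?C * ?d)"
    unfolding total mult.commute[of ?d ?B] by (rule refl)
  also have "\<dots> = ?B / ?C"
    by (rule mult_divide_mult_cancel_right) (simp only: of_nat_eq_0_iff add_eq_0_iff_both_eq_0, simp)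
  finally show ?thesis using sum_card_blocks_NCk[OF assms(1,3), of n] by simp
qed

end
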